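(* Let $p$ be a prime and $S\subseteq\mathbb{F}_p\setminus\{0\}$ a symmetric set such that $G=\Gamma(\mathbb{F}_p,S)$ is self-complementary (isomorphic to its complement). Then $\Theta_{\mathrm{lin}}(G)=\sqrt p$.
   Context: For a symmetric set $S\subseteq\mathbb{F}_p\setminus\{0\}$ ($S=-S$), the Cayley graph $\Gamma(\mathbb{F}_p,S)$ has vertex set $\mathbb{F}_p$, with $u\sim v$ iff $u-v\in S$. $G^k$ is the $k$-fold strong product (distinct vertices adjacent iff in each coordinate they are equal or adjacent). $\alpha_{\mathrm{lin}}(G^k)$ is the largest size of an independent set of $G^k$ that is a linear subspace of $\mathbb{F}_p^k$, and $\Theta_{\mathrm{lin}}(G)=\sup_k\alpha_{\mathrm{lin}}(G^k)^{1/k}$. *)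

theory Defs
  imports Complex_Main "HOL-Computational_Algebra.Primes"
begin

text \<open>Elements of F_p are represented by integers in {0..<p}.
  A connection set S is a subset of {1..<p}; symmetric means S = -S mod p.\<close>

definition cayley_conn_set :: "nat \<Rightarrow> int set \<Rightarrow> bool" where
  "cayley_conn_set p S \<longleftrightarrow> S \<subseteq> {1..<int p} \<and> (\<forall>x\<in>S. (- x) mod int p \<in> S)"

definition cay_adj :: "nat \<Rightarrow> int set \<Rightarrow> int \<Rightarrow> int \<Rightarrow> bool" where
  "cay_adj p S u v \<longleftrightarrow> (u - v) mod int p \<in> S"

definition self_complementary :: "nat \<Rightarrow> int set \<Rightarrow> bool" where
  "self_complementary p S \<longleftrightarrow>
     (\<exists>f. bij_betw f {0..<int p} {0..<int p} \<and>
          (\<forall>u\<in>{0..<int p}. \<forall>v\<in>{0..<int p}. u \<noteq> v \<longrightarrow>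
              (cay_adj p S u v \<longleftrightarrow> (f u \<noteq> f v \<and> \<not> cay_adj p S (f u) (f v)))))"

definition Fvecs :: "nat \<Rightarrow> nat \<Rightarrow> (nat \<Rightarrow> int) set" where
  "Fvecs p k = {v. (\<forall>i<k. v i \<in> {0..<int p}) \<and> (\<forall>i\<ge>k. v i = 0)}"

definition lin_subspace :: "nat \<Rightarrow> nat \<Rightarrow> (nat \<Rightarrow> int) set \<Rightarrow> bool" where
  "lin_subspace p k V \<longleftrightarrow> V \<subseteq> Fvecs p k \<and> (\<lambda>i. 0) \<in> V \<and>
     (\<forall>u\<in>V. \<forall>v\<in>V. (\<lambda>i. (u i + v i) mod int p) \<in> V) \<and>
     (\<forall>c\<in>{0..<int p}. \<forall>u\<in>V. (\<lambda>i. (c * u i) mod int p) \<in> V)"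

definition strong_adj :: "nat \<Rightarrow> int set \<Rightarrow> nat \<Rightarrow> (nat \<Rightarrow> int) \<Rightarrow> (nat \<Rightarrow> int) \<Rightarrow> bool" where
  "strong_adj p S k u v \<longleftrightarrow> u \<noteq> v \<and> (\<forall>i<k. u i = v i \<or> cay_adj p S (u i) (v i))"

definition strong_indep :: "nat \<Rightarrow> int set \<Rightarrow> nat \<Rightarrow> (nat \<Rightarrow> int) set \<Rightarrow> bool" where
  "strong_indep p S k I \<longleftrightarrow> I \<subseteq> Fvecs p k \<and> (\<forall>u\<in>I. \<forall>v\<in>I. \<not> strong_adj p S k u v)"

definition alpha_lin :: "nat \<Rightarrow> int set \<Rightarrow> nat \<Rightarrow> nat" where
  "alpha_lin p S k = Max {card V | V. lin_subspace p k V \<and> strong_indep p S k V}"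

definition theta_lin :: "nat \<Rightarrow> int set \<Rightarrow> real" where
  "theta_lin p S = (SUP k\<in>{1..}. real (alpha_lin p S k) powr (1 / real k))"

end

theory Submission
  imports Defs "HOL-Number_Theory.Cong" "HOL-Combinatorics.Permutations"
begin

text \<open>Upper bound, by the polynomial method: if \<open>V\<close> is a \<open>d\<close>-dimensional independent
  subspace of \<open>F\<^sub>p\<^sup>k\<close> and \<open>N\<close> is the set of nonzero non-neighbours of \<open>0\<close>, the polynomial
  \<open>\<Prod>\<^sub>i \<Prod>\<^sub>s\<^sub>\<in>\<^sub>N (x\<^sub>i - s)\<close> vanishes on \<open>V - {0}\<close> but not at \<open>0\<close>. As polynomials of degree
  below \<open>(p - 1) d\<close> sum to \<open>0\<close> mod \<open>p\<close> over \<open>V\<close>, this forces \<open>(p - 1) d \<le> k |N|\<close>, and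
  self-complementarity gives \<open>2 |N| \<le> p - 1\<close>, so \<open>|V| \<le> p\<^sup>k\<^sup>/\<^sup>2\<close>.

  Lower bound: some multiplier \<open>x \<mapsto> a x\<close> maps \<open>G\<close> onto its complement (found by counting
  orbits in the automorphism group, whose order divides \<open>p!\<close>), and then the line
  \<open>{(c, a c)}\<close> is an independent subspace of \<open>G\<^sup>2\<close> with \<open>p\<close> elements.\<close>

section \<open>Polynomial functions and finite differences\<close>

text \<open>\<open>deg_lt n f\<close>: \<open>f\<close> is an integer polynomial in the coordinates \<open>x i\<close> of total degree
  less than \<open>n\<close>.\<close>
inductive deg_lt :: "nat \<Rightarrow> ((nat \<Rightarrow> int) \<Rightarrow> int) \<Rightarrow> bool" where
  zero: "deg_lt n (\<lambda>x. 0)"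
| const: "deg_lt (Suc n) (\<lambda>x. a)"
| var: "deg_lt (Suc (Suc n)) (\<lambda>x. x i)"
| add: "deg_lt n f \<Longrightarrow> deg_lt n g \<Longrightarrow> deg_lt n (\<lambda>x. f x + g x)"
| smul: "deg_lt n f \<Longrightarrow> deg_lt n (\<lambda>x. a * f x)"
| mul: "deg_lt (Suc m) f \<Longrightarrow> deg_lt (Suc n) g \<Longrightarrow> deg_lt (Suc (m + n)) (\<lambda>x. f x * g x)"

lemma deg_lt_cong: "deg_lt n f \<Longrightarrow> (\<And>x. f x = g x) \<Longrightarrow> deg_lt n g"
  by (metis ext)

lemma deg_lt_0_imp_zero: "deg_lt 0 f \<Longrightarrow> f = (\<lambda>x. 0)"
proof (induction "0::nat" f rule: deg_lt.induct)
qed auto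

lemma deg_lt_diff: "deg_lt n f \<Longrightarrow> deg_lt n g \<Longrightarrow> deg_lt n (\<lambda>x. f x - g x)"
  by (rule deg_lt_cong[OF deg_lt.add[OF _ deg_lt.smul[of _ _ "-1"]]]) auto

lemma deg_lt_cong_mod:
  "deg_lt n f \<Longrightarrow> (\<And>i. [x i = y i] (mod q)) \<Longrightarrow> [f x = f y] (mod q)"
proof (induction rule: deg_lt.induct)
qed (auto intro: cong_add cong_scalar_left cong_mult)

definition vec_add :: "(nat \<Rightarrow> int) \<Rightarrow> (nat \<Rightarrow> int) \<Rightarrow> nat \<Rightarrow> int" where
  "vec_add x v = (\<lambda>i. x i + v i)"

definition fdiff :: "(nat \<Rightarrow> int) \<Rightarrow> ((nat \<Rightarrow> int) \<Rightarrow> int) \<Rightarrow> (nat \<Rightarrow> int) \<Rightarrow> int" where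
  "fdiff v f = (\<lambda>x. f (vec_add x v) - f x)"

lemma deg_lt_translate: "deg_lt n f \<Longrightarrow> deg_lt n (\<lambda>x. f (vec_add x v))"
proof (induction rule: deg_lt.induct)
  case (var n i)
  show ?case
    by (rule deg_lt_cong[OF deg_lt.add[OF deg_lt.var deg_lt.const]]) (simp add: vec_add_def)
qed (auto intro: deg_lt.intros)

lemma deg_lt_fdiff: "deg_lt n f \<Longrightarrow> deg_lt (n - 1) (fdiff v f)"
proof (induction rule: deg_lt.induct)
  case (zero n)
  show ?case by (rule deg_lt_cong[OF deg_lt.zero]) (simp add: fdiff_def)
next
  case (const n a)
  show ?case by (rule deg_lt_cong[OF deg_lt.zero]) (simp add: fdiff_def)
next
  case (var n i)
  have "deg_lt (Suc n) (fdiff v (\<lambda>x. x i))"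
    by (rule deg_lt_cong[OF deg_lt.const[of n "v i"]]) (simp add: fdiff_def vec_add_def)
  then show ?case by simp
next
  case (add n f g)
  show ?case by (rule deg_lt_cong[OF deg_lt.add[OF add.IH]]) (simp add: fdiff_def)
next
  case (smul n f a)
  show ?case
    by (rule deg_lt_cong[OF deg_lt.smul[OF smul.IH, of a]]) (simp add: fdiff_def algebra_simps)
next
  case (mul m f n g)
  \<comment> \<open>discrete product rule: \<open>\<Delta>(f g) = \<Delta>f \<cdot> g(x + v) + f \<cdot> \<Delta>g\<close>\<close>
  have left: "deg_lt (m + n) (\<lambda>x. fdiff v f x * g (vec_add x v))"
  proof (cases m)
    case 0
    then have "fdiff v f = (\<lambda>x. 0)" using mul.IH(1) deg_lt_0_imp_zero by simp
    then show ?thesis by (simp add: deg_lt.zero)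
  next
    case (Suc m')
    show ?thesis
      using deg_lt.mul[of m' "fdiff v f" n] mul.IH(1) Suc deg_lt_translate[OF mul.hyps(2)] by simp
  qed
  have right: "deg_lt (m + n) (\<lambda>x. f x * fdiff v g x)"
  proof (cases n)
    case 0
    then have "fdiff v g = (\<lambda>x. 0)" using mul.IH(2) deg_lt_0_imp_zero by simp
    then show ?thesis by (simp add: deg_lt.zero)
  next
    case (Suc n')
    show ?thesis using deg_lt.mul[of m f n' "fdiff v g"] mul.IH(2) Suc mul.hyps(1) by simp
  qed
  have "deg_lt (m + n) (fdiff v (\<lambda>x. f x * g x))"
    by (rule deg_lt_cong[OF deg_lt.add[OF left right]]) (simp add: fdiff_def algebra_simps)
  then show ?case by simp
qed

lemma deg_lt_fdiff_iter: "deg_lt n f \<Longrightarrow> deg_lt (n - j) ((fdiff v ^^ j) f)"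
proof (induction j)
  case (Suc j)
  have "deg_lt (n - j - 1) (fdiff v ((fdiff v ^^ j) f))"
    using deg_lt_fdiff Suc by blast
  then show ?case by simp
qed simp

lemma alternating_binomial_sum_diff:
  fixes g :: "nat \<Rightarrow> int"
  shows "(\<Sum>j\<le>m. (-1)^(m-j) * int (m choose j) * g (Suc j))
       - (\<Sum>j\<le>m. (-1)^(m-j) * int (m choose j) * g j)
       = (\<Sum>j\<le>Suc m. (-1)^(Suc m-j) * int (Suc m choose j) * g j)"
proof -
  have shift: "(\<Sum>j\<le>Suc m. (-1)^(Suc m-j) * int (Suc m choose j) * g j)
     = (-1)^(Suc m) * g 0 + (\<Sum>j\<le>m. (-1)^(m-j) * int (m choose j) * g (Suc j))
       + (\<Sum>j<m. (-1)^(m-j) * int (m choose Suc j) * g (Suc j))"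
    by (subst sum.atMost_Suc_shift) (simp add: sum.distrib algebra_simps lessThan_Suc_atMost[symmetric])
  have split_0: "(\<Sum>j\<le>m. (-1)^(m-j) * int (m choose j) * g j)
     = (-1)^m * g 0 + (\<Sum>j<m. (-1)^(m - Suc j) * int (m choose Suc j) * g (Suc j))"
    by (subst sum.atMost_shift) simp
  have "(\<Sum>j<m. (-1)^(m-j) * int (m choose Suc j) * g (Suc j))
     = (\<Sum>j<m. - ((-1)^(m - Suc j) * int (m choose Suc j) * g (Suc j)))"
  proof (rule sum.cong)
    fix j assume "j \<in> {..<m}"
    then have "m - j = Suc (m - Suc j)" by auto
    then show "(-1)^(m-j) * int (m choose Suc j) * g (Suc j)
             = - ((-1)^(m - Suc j) * int (m choose Suc j) * g (Suc j))" by simp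
  qed simp
  then show ?thesis using shift split_0 by (simp add: sum_negf)
qed

lemma fdiff_iter_expand:
  "(fdiff v ^^ m) f x
     = (\<Sum>j\<le>m. (-1)^(m-j) * int (m choose j) * f (vec_add x (\<lambda>i. int j * v i)))"
proof (induction m arbitrary: x)
  case 0
  then show ?case by (simp add: vec_add_def)
next
  case (Suc m)
  have shift: "vec_add (vec_add x v) (\<lambda>i. int j * v i) = vec_add x (\<lambda>i. int (Suc j) * v i)" for j
    by (simp add: vec_add_def fun_eq_iff algebra_simps)
  have "(fdiff v ^^ Suc m) f x = (fdiff v ^^ m) f (vec_add x v) - (fdiff v ^^ m) f x"
    by (simp add: fdiff_def)
  also have "\<dots> = (\<Sum>j\<le>Suc m. (-1)^(Suc m-j) * int (Suc m choose j) * f (vec_add x (\<lambda>i. int j * v i)))"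
    unfolding Suc shift by (rule alternating_binomial_sum_diff)
  finally show ?case .
qed

lemma binomial_pred_prime_cong:
  assumes "prime p" "j \<le> p - 1"
  shows "[int (p - 1 choose j) = (-1)^j] (mod int p)"
  using assms(2)
proof (induction j)
  case 0
  then show ?case by simp
next
  case (Suc j)
  have "p dvd (p - 1 choose j) + (p - 1 choose Suc j)"
    using dvd_choose_prime[of "Suc j" p] Suc.prems assms(1)
    by (simp add: choose_reduce_nat[of p "Suc j"] prime_gt_1_nat)
  then have "[int (p - 1 choose Suc j) = - int (p - 1 choose j)] (mod int p)"
    by (simp add: cong_iff_dvd_diff add.commute flip: of_nat_add)
  also have "[- int (p - 1 choose j) = - ((-1)^j)] (mod int p)"
    using Suc by (simp add: cong_minus_minus_iff)
  finally show ?case by simp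
qed

lemma neg_one_power_pred_prime_cong:
  assumes "prime p" shows "[(-1::int)^(p-1) = 1] (mod int p)"
proof (cases "p = 2")
  case False
  then have "odd p" using assms prime_odd_nat prime_ge_2_nat[OF assms] by simp
  then show ?thesis by simp
qed (simp add: cong_def)

text \<open>Since \<open>(p - 1 choose j) \<equiv> (-1)\<^sup>j\<close>, the binomial expansion of the \<open>(p - 1)\<close>-st difference
  is, mod \<open>p\<close>, the plain sum along the line.\<close>
lemma sum_line_cong_fdiff_iter:
  assumes "prime p"
  shows "[(\<Sum>c<p. f (vec_add x (\<lambda>i. int c * v i))) = (fdiff v ^^ (p-1)) f x] (mod int p)"
proof -
  have atMost: "{..p-1} = {..<p}" using prime_gt_1_nat[OF assms] by auto
  have "[(-1)^(p-1-j) * int (p - 1 choose j) = 1] (mod int p)" if "j < p" for j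
  proof -
    have "[(-1)^(p-1-j) * int (p - 1 choose j) = (-1)^(p-1-j) * (-1)^j] (mod int p)"
      using binomial_pred_prime_cong[OF assms] that by (intro cong_scalar_left) simp
    also have "(-1::int)^(p-1-j) * (-1)^j = (-1)^(p-1)"
      using that by (simp flip: power_add)
    also have "[\<dots> = 1] (mod int p)" by (rule neg_one_power_pred_prime_cong[OF assms])
    finally show ?thesis .
  qed
  then have "[(\<Sum>j<p. (-1)^(p-1-j) * int (p - 1 choose j) * f (vec_add x (\<lambda>i. int j * v i)))
        = (\<Sum>c<p. f (vec_add x (\<lambda>i. int c * v i)))] (mod int p)"
    by (intro cong_sum) (metis cong_scalar_right lessThan_iff mult_1)
  then show ?thesis unfolding fdiff_iter_expand atMost by (rule cong_sym)
qed

section \<open>Sums of polynomials over subspaces of \<open>F\<^sub>p\<^sup>k\<close>\<close>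

lemma Fvecs_finite: "finite (Fvecs p k)"
proof (rule finite_subset)
  show "Fvecs p k \<subseteq> {f. \<forall>i. (i \<in> {..<k} \<longrightarrow> f i \<in> {0..<int p}) \<and> (i \<notin> {..<k} \<longrightarrow> f i = 0)}"
    by (auto simp: Fvecs_def)
  show "finite \<dots>" by (rule finite_set_of_finite_funs) simp_all
qed

lemma Fvecs_coord: "v \<in> Fvecs p k \<Longrightarrow> 0 < p \<Longrightarrow> v i \<in> {0..<int p}"
  unfolding Fvecs_def by (cases "i < k") auto

lemma lin_subspace_finite: "lin_subspace p k V \<Longrightarrow> finite V"
  unfolding lin_subspace_def using Fvecs_finite finite_subset by blast

lemma lin_subspace_coord_kernel:
  "lin_subspace p k V \<Longrightarrow> lin_subspace p k {x \<in> V. x j = 0}"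
  unfolding lin_subspace_def by auto

lemma lin_subspace_coord: "lin_subspace p k V \<Longrightarrow> x \<in> V \<Longrightarrow> 0 < p \<Longrightarrow> x i \<in> {0..<int p}"
  unfolding lin_subspace_def using Fvecs_coord by blast

lemma lin_subspace_add: "lin_subspace p k V \<Longrightarrow> u \<in> V \<Longrightarrow> v \<in> V \<Longrightarrow> (\<lambda>i. (u i + v i) mod int p) \<in> V"
  unfolding lin_subspace_def by blast

lemma lin_subspace_smult:
  "lin_subspace p k V \<Longrightarrow> c \<in> {0..<int p} \<Longrightarrow> u \<in> V \<Longrightarrow> (\<lambda>i. (c * u i) mod int p) \<in> V"
  unfolding lin_subspace_def by blast

lemma inverse_mod_prime:
  assumes p: "prime p" and m: "\<not> int p dvd m"
  obtains a where "a \<in> {1..<int p}" "[a * m = 1] (mod int p)"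
proof -
  have "coprime m (int p)"
    using p m prime_imp_coprime[of "int p" m] coprime_commute by (metis prime_nat_int_transfer)
  then obtain t where t: "[m * t = 1] (mod int p)" using cong_solve_coprime_int by blast
  define a where "a = t mod int p"
  have "[a * m = 1] (mod int p)"
    using t unfolding a_def cong_def by (metis mod_mult_left_eq mult.commute)
  moreover from this have "a \<noteq> 0" using prime_gt_1_nat[OF p] by (auto simp: cong_def)
  moreover have "0 \<le> a" "a < int p" using prime_gt_0_nat[OF p] by (simp_all add: a_def)
  ultimately show thesis by (intro that) auto
qed

lemma lin_subspace_normalized_vector:
  assumes p: "prime p" and V: "lin_subspace p k V" and v: "v \<in> V" "v \<noteq> (\<lambda>i. 0)"
  obtains w j where "w \<in> V" "w j = 1"
proof -
  obtain j where j: "v j \<noteq> 0" using v(2) by auto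
  have "v j \<in> {0..<int p}" using lin_subspace_coord[OF V v(1) prime_gt_0_nat[OF p]] .
  with j have "\<not> int p dvd v j" using zdvd_imp_le by fastforce
  then obtain b where b: "b \<in> {1..<int p}" "[b * v j = 1] (mod int p)"
    using inverse_mod_prime[OF p] by blast
  define w where "w = (\<lambda>i. (b * v i) mod int p)"
  have "w \<in> V" using lin_subspace_smult[OF V _ v(1)] b(1) by (simp add: w_def)
  moreover have "w j = 1" using b(2) prime_gt_1_nat[OF p] by (simp add: w_def cong_def)
  ultimately show thesis by (rule that)
qed

lemma lin_subspace_decompose_inj:
  assumes p: "0 < p" and V: "lin_subspace p k V" and w: "w j = 1"
  shows "inj_on (\<lambda>(x', c). (\<lambda>i. (x' i + int c * w i) mod int p)) ({x \<in> V. x j = 0} \<times> {..<p})"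
    (is "inj_on ?\<phi> (?V' \<times> _)")
proof (rule inj_onI)
  fix a b assume "a \<in> ?V' \<times> {..<p}" "b \<in> ?V' \<times> {..<p}" and eq: "?\<phi> a = ?\<phi> b"
  then obtain x c y d where ab: "a = (x, c)" "b = (y, d)"
    and x: "x \<in> V" "x j = 0" "c < p" and y: "y \<in> V" "y j = 0" "d < p" by auto
  note eq = eq[unfolded ab]
  have "?\<phi> (x, c) j = ?\<phi> (y, d) j" using eq by simp
  then have "c = d" using x y w by simp
  moreover have "x i = y i" for i
  proof -
    have "[x i + int c * w i = y i + int c * w i] (mod int p)"
      using fun_cong[OF eq, of i] \<open>c = d\<close> by (simp add: cong_def)
    then have "[x i = y i] (mod int p)" by (rule cong_add_rcancel[THEN iffD1])
    then show ?thesis using lin_subspace_coord[OF V _ p] x(1) y(1) by (simp add: cong_def)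
  qed
  ultimately show "a = b" using ab by auto
qed

lemma lin_subspace_decompose_image:
  assumes p: "0 < p" and V: "lin_subspace p k V" and w: "w \<in> V" "w j = 1"
  shows "(\<lambda>(x', c). (\<lambda>i. (x' i + int c * w i) mod int p)) ` ({x \<in> V. x j = 0} \<times> {..<p}) = V"
    (is "?\<phi> ` (?V' \<times> _) = V")
proof (intro equalityI subsetI)
  fix z assume "z \<in> ?\<phi> ` (?V' \<times> {..<p})"
  then obtain x c where x: "x \<in> V" "c < p" and z: "z = ?\<phi> (x, c)" by auto
  have "(\<lambda>i. (x i + (int c * w i) mod int p) mod int p) \<in> V"
    using lin_subspace_add[OF V x(1) lin_subspace_smult[OF V _ w(1), of "int c"]] x(2) by simp
  then show "z \<in> V" unfolding z by (simp add: mod_add_right_eq)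
next
  fix z assume z: "z \<in> V"
  note range = lin_subspace_coord[OF V z p]
  define s where "s = (- z j) mod int p"
  have s: "s \<in> {0..<int p}" using p by (simp add: s_def)
  define x where "x = (\<lambda>i. (z i + (s * w i) mod int p) mod int p)"
  have "x \<in> ?V'"
    using lin_subspace_add[OF V z lin_subspace_smult[OF V s w(1)]] w(2)
    unfolding x_def s_def by (simp add: mod_simps)
  moreover have "?\<phi> (x, nat (z j)) = z"
  proof
    fix i
    have "?\<phi> (x, nat (z j)) i = (z i + (s + z j) * w i) mod int p"
      using range[of j] unfolding x_def by (simp add: mod_simps algebra_simps)
    also have "\<dots> = (z i + (s + z j) mod int p * w i) mod int p"
      by (metis mod_add_right_eq mod_mult_left_eq)
    also have "\<dots> = z i" using range by (simp add: s_def mod_simps)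
    finally show "?\<phi> (x, nat (z j)) i = z i" .
  qed
  moreover have "nat (z j) < p" using range[of j] by auto
  ultimately show "z \<in> ?\<phi> ` (?V' \<times> {..<p})" by (intro image_eqI[of _ _ "(x, nat (z j))"]) auto
qed

lemma lin_subspace_decompose:
  assumes "0 < p" "lin_subspace p k V" "w \<in> V" "w j = 1"
  shows "bij_betw (\<lambda>(x', c). (\<lambda>i. (x' i + int c * w i) mod int p)) ({x \<in> V. x j = 0} \<times> {..<p}) V"
  using lin_subspace_decompose_inj[of p k V w j] lin_subspace_decompose_image[of p k V w j] assms
  by (simp add: bij_betw_imageI)

lemma lin_subspace_split:
  assumes p: "prime p" and V: "lin_subspace p k V" and card: "1 < card V"
  obtains V' w where "lin_subspace p k V'" "card V = card V' * p"
    "bij_betw (\<lambda>(x', c). (\<lambda>i. (x' i + int c * w i) mod int p)) (V' \<times> {..<p}) V"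
proof -
  have "\<not> V \<subseteq> {\<lambda>i. 0}" using card card_mono[of "{\<lambda>i. 0}" V] by auto
  then obtain v where "v \<in> V" "v \<noteq> (\<lambda>i. 0)" by auto
  then obtain w j where w: "w \<in> V" "w j = 1"
    using lin_subspace_normalized_vector[OF p V] by blast
  note bij = lin_subspace_decompose[OF prime_gt_0_nat[OF p] V w]
  show thesis
  proof (rule that[OF lin_subspace_coord_kernel[OF V] _ bij])
    show "card V = card {x \<in> V. x j = 0} * p"
      using bij_betw_same_card[OF bij] by (simp add: card_cartesian_product)
  qed
qed

lemma lin_subspace_card:
  assumes p: "prime p" and V: "lin_subspace p k V"
  obtains d where "card V = p ^ d"
  using V
proof (induction "card V" arbitrary: V thesis rule: less_induct)
  case less
  show ?case
  proof (cases "card V \<le> 1")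
    case True
    have "0 < card V" using lin_subspace_finite[OF less.prems(2)] less.prems(2)
      unfolding lin_subspace_def by (auto simp: card_gt_0_iff)
    with True show ?thesis using less.prems(1)[of 0] by simp
  next
    case False
    then obtain V' where V': "lin_subspace p k V'" "card V = card V' * p"
      using lin_subspace_split[OF p less.prems(2)] by (metis not_le)
    then have "card V' \<noteq> 0" using False by (metis le0 mult_0)
    then have "card V' < card V" using V'(2) prime_gt_1_nat[OF p] by simp
    then obtain d where "card V' = p ^ d" using less.hyps V'(1) by blast
    then show ?thesis using V'(2) less.prems(1)[of "Suc d"] by (simp add: mult.commute)
  qed
qed

text \<open>Summing a polynomial along lines in \<open>w\<close>-direction (\<open>p - 1\<close> finite differences) lowers
  its degree by \<open>p - 1\<close> and the dimension by one.\<close>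
lemma lin_subspace_sum_deg_lt_cong_0:
  assumes p: "prime p"
  shows "lin_subspace p k V \<Longrightarrow> card V = p ^ d \<Longrightarrow> deg_lt n F \<Longrightarrow> n \<le> (p - 1) * d
     \<Longrightarrow> [(\<Sum>x\<in>V. F x) = 0] (mod int p)"
proof (induction d arbitrary: V n F)
  case 0
  then have "F = (\<lambda>x. 0)" using deg_lt_0_imp_zero by simp
  then show ?case by simp
next
  case (Suc d)
  have "1 < card V"
    using Suc.prems(2) one_less_power[OF prime_gt_1_nat[OF p], of "Suc d"] by simp
  then obtain V' w where V': "lin_subspace p k V'" "card V = card V' * p"
    and bij: "bij_betw (\<lambda>(x', c). (\<lambda>i. (x' i + int c * w i) mod int p)) (V' \<times> {..<p}) V"
    using lin_subspace_split[OF p Suc.prems(1)] by blast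
  have card': "card V' = p ^ d" using V'(2) Suc.prems(2) prime_gt_0_nat[OF p] by simp
  define G where "G = (fdiff w ^^ (p - 1)) F"
  have "[(\<Sum>x'\<in>V'. G x') = 0] (mod int p)"
    using Suc.IH[OF V'(1) card' deg_lt_fdiff_iter[OF Suc.prems(3)]] Suc.prems(4)
    by (simp add: G_def algebra_simps)
  moreover have "[(\<Sum>c<p. F (\<lambda>i. (x' i + int c * w i) mod int p)) = G x'] (mod int p)" for x'
  proof -
    have "[(\<Sum>c<p. F (\<lambda>i. (x' i + int c * w i) mod int p))
          = (\<Sum>c<p. F (vec_add x' (\<lambda>i. int c * w i)))] (mod int p)"
      by (intro cong_sum deg_lt_cong_mod[OF Suc.prems(3)]) (simp add: vec_add_def cong_def)
    also have "[(\<Sum>c<p. F (vec_add x' (\<lambda>i. int c * w i))) = G x'] (mod int p)"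
      unfolding G_def by (rule sum_line_cong_fdiff_iter[OF p])
    finally show ?thesis .
  qed
  then have "[(\<Sum>x'\<in>V'. \<Sum>c<p. F (\<lambda>i. (x' i + int c * w i) mod int p)) = (\<Sum>x'\<in>V'. G x')] (mod int p)"
    by (rule cong_sum)
  moreover have "(\<Sum>x\<in>V. F x) = (\<Sum>x'\<in>V'. \<Sum>c<p. F (\<lambda>i. (x' i + int c * w i) mod int p))"
    using sum.reindex_bij_betw[OF bij, of F, symmetric] by (simp add: sum.cartesian_product split_def)
  ultimately show ?case using cong_trans by metis
qed

section \<open>The upper bound\<close>

lemma deg_lt_prod_roots: "finite A \<Longrightarrow> deg_lt (Suc (card A)) (\<lambda>x. \<Prod>s\<in>A. x i - s)"
proof (induction rule: finite_induct)
  case empty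
  show ?case by (simp add: deg_lt.const)
next
  case (insert a A)
  have "deg_lt (Suc (Suc 0)) (\<lambda>x. x i - a)"
    by (rule deg_lt_diff[OF deg_lt.var deg_lt.const])
  from deg_lt.mul[OF this insert.IH] insert.hyps show ?case by simp
qed

lemma deg_lt_prod_prod_roots:
  "finite A \<Longrightarrow> deg_lt (Suc (k * card A)) (\<lambda>x. \<Prod>i<k. \<Prod>s\<in>A. x i - s)"
proof (induction k)
  case 0
  show ?case by (simp add: deg_lt.const)
next
  case (Suc k)
  from deg_lt.mul[OF Suc.IH[OF Suc.prems] deg_lt_prod_roots[OF Suc.prems, of k]]
  show ?case by (simp add: add.commute mult.commute)
qed

lemma lin_indep_dim_le:
  assumes p: "prime p" and V: "lin_subspace p k V" and I: "strong_indep p S k V"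
    and d: "card V = p ^ d"
  shows "(p - 1) * d \<le> k * card ({1..<int p} - S)"
proof (rule ccontr)
  assume small_degree: "\<not> ?thesis"
  define N where "N = {1..<int p} - S"
  define F where "F = (\<lambda>x. \<Prod>i<k. \<Prod>s\<in>N. x i - s)"
  have "finite N" by (simp add: N_def)
  have zero: "(\<lambda>i. 0) \<in> V" using V unfolding lin_subspace_def by blast
  have "F x = 0" if x: "x \<in> V - {\<lambda>i. 0}" for x
  proof -
    have "\<not> strong_adj p S k x (\<lambda>i. 0)" using I x zero unfolding strong_indep_def by blast
    then obtain i where i: "i < k" "x i \<noteq> 0" "(x i) mod int p \<notin> S"
      using x unfolding strong_adj_def cay_adj_def by auto
    have "x i \<in> {0..<int p}" using lin_subspace_coord[OF V _ prime_gt_0_nat[OF p]] x by blast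
    with i have "x i \<in> N" by (auto simp: N_def)
    then show ?thesis using i(1) \<open>finite N\<close> unfolding F_def by (auto intro!: prod_zero)
  qed
  then have "(\<Sum>x\<in>V. F x) = F (\<lambda>i. 0)"
    using sum.remove[OF lin_subspace_finite[OF V] zero, of F] by simp
  moreover have "[(\<Sum>x\<in>V. F x) = 0] (mod int p)"
    using lin_subspace_sum_deg_lt_cong_0[OF p V d deg_lt_prod_prod_roots[OF \<open>finite N\<close>]]
      small_degree by (simp add: F_def N_def)
  moreover have "\<not> int p dvd F (\<lambda>i. 0)"
  proof
    assume "int p dvd F (\<lambda>i. 0)"
    then have "int p dvd (\<Prod>s\<in>N. - s) ^ k" by (simp add: F_def)
    then have "int p dvd (\<Prod>s\<in>N. - s)" using p prime_dvd_power[of "int p"] by simp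
    then obtain s where "s \<in> N" "int p dvd s"
      using \<open>finite N\<close> p by (auto simp: prime_dvd_prod_iff)
    then show False using zdvd_imp_le[of "int p" s] by (auto simp: N_def)
  qed
  ultimately show False by (simp add: cong_0_iff)
qed

text \<open>The anti-isomorphism \<open>f\<close> maps non-neighbours \<open>v\<close> of \<open>0\<close> injectively to neighbours
  \<open>f v - f 0\<close> of \<open>0\<close>.\<close>
lemma self_complementary_card_non_neighbours:
  assumes S: "S \<subseteq> {1..<int p}" and sc: "self_complementary p S"
  shows "2 * card ({1..<int p} - S) \<le> p - 1"
proof -
  obtain f where bij: "bij_betw f {0..<int p} {0..<int p}"
    and iso: "\<And>u v. u \<in> {0..<int p} \<Longrightarrow> v \<in> {0..<int p} \<Longrightarrow> u \<noteq> v \<Longrightarrow>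
        (cay_adj p S u v \<longleftrightarrow> (f u \<noteq> f v \<and> \<not> cay_adj p S (f u) (f v)))"
    using sc unfolding self_complementary_def by blast
  have inj: "inj_on f {0..<int p}" and range: "\<And>u. u \<in> {0..<int p} \<Longrightarrow> f u \<in> {0..<int p}"
    using bij by (auto simp: bij_betw_def)
  define N where "N = {1..<int p} - S"
  define g where "g = (\<lambda>v. (f v - f 0) mod int p)"
  have "g ` N \<subseteq> S"
  proof
    fix y assume "y \<in> g ` N"
    then obtain v where v: "v \<in> {1..<int p}" "v \<notin> S" and y: "y = g v" by (auto simp: N_def)
    have vU: "v \<in> {0..<int p}" "(0::int) \<in> {0..<int p}" "v \<noteq> 0" using v by auto
    have "\<not> cay_adj p S v 0" using v unfolding cay_adj_def by simp
    moreover have "f v \<noteq> f 0" using inj_onD[OF inj _ vU(1,2)] vU(3) by blast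
    ultimately have "cay_adj p S (f v) (f 0)" using iso[OF vU] by blast
    then show "y \<in> S" unfolding y g_def cay_adj_def .
  qed
  moreover have "inj_on g N"
  proof (rule inj_onI)
    fix v w assume vw: "v \<in> N" "w \<in> N" and "g v = g w"
    then have "[f v - f 0 = f w - f 0] (mod int p)" by (simp add: g_def cong_def)
    then have "[f v = f w] (mod int p)" by (simp add: cong_iff_dvd_diff)
    have vwU: "v \<in> {0..<int p}" "w \<in> {0..<int p}" using vw by (auto simp: N_def)
    with \<open>[f v = f w] (mod int p)\<close> have "f v = f w"
      using range[OF vwU(1)] range[OF vwU(2)] by (simp add: cong_def)
    then show "v = w" using inj_onD[OF inj _ vwU] by blast
  qed
  ultimately have "card N \<le> card S"
    using card_inj_on_le finite_subset[OF S] by blast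
  moreover have "card N + card S = p - 1"
    using card_Diff_subset[OF finite_subset[OF S] S] card_mono[OF _ S] by (simp add: N_def)
  ultimately show ?thesis by (simp add: N_def)
qed

section \<open>A multiplier mapping \<open>G\<close> onto its complement\<close>

lemma equiv_left_coset_rel:
  assumes G: "G \<subseteq> {g. g permutes U}" "id \<in> G"
    and comp: "\<And>g h. g \<in> G \<Longrightarrow> h \<in> G \<Longrightarrow> g \<circ> h \<in> G"
    and inv: "\<And>g. g \<in> G \<Longrightarrow> inv g \<in> G"
  shows "equiv {g. g permutes U} {(g, h). g permutes U \<and> (\<exists>a\<in>G. h = g \<circ> a)}"
    (is "equiv ?P ?r")
proof (rule equivI)
  show "?r \<subseteq> ?P \<times> ?P"
  proof
    fix x assume "x \<in> ?r"
    then obtain g a where "x = (g, g \<circ> a)" "g permutes U" "a \<in> G" by auto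
    then show "x \<in> ?P \<times> ?P" using G(1) permutes_compose[of a U g] by auto
  qed
  show "refl_on ?P ?r"
  proof (rule refl_onI)
    fix g assume "g \<in> ?P"
    then show "(g, g) \<in> ?r" using G(2) by (auto intro!: bexI[of _ id])
  qed
  show "sym ?r"
  proof (rule symI)
    fix g h assume "(g, h) \<in> ?r"
    then obtain a where g: "g permutes U" and a: "a \<in> G" "h = g \<circ> a" by auto
    have "a permutes U" using G(1) a(1) by blast
    then have "g = h \<circ> inv a" using a(2) by (simp add: comp_assoc permutes_inv_o)
    moreover have "h permutes U" using permutes_compose[OF \<open>a permutes U\<close> g] a(2) by simp
    ultimately show "(h, g) \<in> ?r" using inv[OF a(1)] by blast
  qed
  show "trans ?r"
  proof (rule transI)
    fix g h k assume "(g, h) \<in> ?r" "(h, k) \<in> ?r"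
    then obtain a b where "g permutes U" "a \<in> G" "b \<in> G" "k = g \<circ> (a \<circ> b)"
      by (auto simp: comp_assoc)
    then show "(g, k) \<in> ?r" using comp by blast
  qed
qed

lemma card_permutation_group_dvd_fact:
  assumes U: "finite U" and G: "G \<subseteq> {g. g permutes U}" "id \<in> G"
    and comp: "\<And>g h. g \<in> G \<Longrightarrow> h \<in> G \<Longrightarrow> g \<circ> h \<in> G"
    and inv: "\<And>g. g \<in> G \<Longrightarrow> inv g \<in> G"
  shows "card G dvd fact (card U)"
proof -
  let ?P = "{g. g permutes U}"
  define r where "r = {(g, h). g permutes U \<and> (\<exists>a\<in>G. h = g \<circ> a)}"
  have "card G dvd card X" if in_quotient: "X \<in> ?P // r" for X
  proof -
    obtain g where g: "g permutes U" and X: "X = r `` {g}"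
      using in_quotient by (auto elim!: quotientE)
    have "X = (\<circ>) g ` G" using g by (auto simp: X r_def)
    moreover have "inj_on ((\<circ>) g) G"
    proof (rule inj_onI)
      fix a b :: "'a \<Rightarrow> 'a" assume "g \<circ> a = g \<circ> b"
      then show "a = b" using permutes_inj[OF g] by (simp add: fun_eq_iff inj_eq)
    qed
    ultimately show ?thesis by (simp add: card_image)
  qed
  moreover have "finite ?P" using finite_permutations[OF U] by simp
  moreover have "equiv ?P r" unfolding r_def using G comp inv by (rule equiv_left_coset_rel)
  ultimately have "card G dvd card ?P" by (rule equiv_imp_dvd_card[rotated 2])
  then show ?thesis using card_permutations[OF refl U] by simp
qed

lemma prime_square_not_dvd_fact:
  assumes "prime p" shows "\<not> p ^ 2 dvd fact p"
proof
  assume "p ^ 2 dvd fact p"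
  moreover have "fact p = p * fact (p - 1)"
    using fact_reduce[of p, where 'a=nat] prime_gt_0_nat[OF assms] by simp
  ultimately have "p dvd fact (p - 1)"
    using prime_gt_0_nat[OF assms] by (simp add: power2_eq_square)
  then show False using prime_dvd_fact_iff[OF assms] prime_gt_0_nat[OF assms] by simp
qed

lemma translation_equivariant_affine:
  assumes p: "prime p" and range: "\<And>x. x \<in> {0..<int p} \<Longrightarrow> \<psi> x \<in> {0..<int p}"
    and step: "\<And>x. x \<in> {0..<int p} \<Longrightarrow> \<psi> ((x + m) mod int p) = (\<psi> x + 1) mod int p"
  obtains a where "a \<in> {1..<int p}" "\<And>x. x \<in> {0..<int p} \<Longrightarrow> \<psi> x = (\<psi> 0 + a * x) mod int p"
proof -
  have p1: "1 < int p" using prime_gt_1_nat[OF p] by simp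
  have iter: "\<psi> ((x + int n * m) mod int p) = (\<psi> x + int n) mod int p"
    if "x \<in> {0..<int p}" for x n
  proof (induction n)
    case 0
    then show ?case using that range[OF that] by simp
  next
    case (Suc n)
    have "(x + int (Suc n) * m) mod int p = ((x + int n * m) mod int p + m) mod int p"
      by (simp add: mod_simps algebra_simps)
    then show ?case using step[of "(x + int n * m) mod int p"] Suc p1
      by (simp add: mod_simps algebra_simps)
  qed
  have zero: "(0::int) \<in> {0..<int p}" using p1 by simp
  have "\<not> int p dvd m"
  proof
    assume "int p dvd m"
    then have "\<psi> 0 = (\<psi> 0 + 1) mod int p" using step[OF zero] by simp
    then have "[\<psi> 0 + 1 = \<psi> 0] (mod int p)" using range[OF zero] by (simp add: cong_def)
    then show False using p1 by (simp add: cong_iff_dvd_diff)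
  qed
  then obtain a where a: "a \<in> {1..<int p}" and am: "[a * m = 1] (mod int p)"
    using inverse_mod_prime[OF p] by blast
  have "\<psi> x = (\<psi> 0 + a * x) mod int p" if x: "x \<in> {0..<int p}" for x
  proof -
    define n where "n = nat ((a * x) mod int p)"
    have n: "int n = (a * x) mod int p" unfolding n_def using p1 by simp
    have "[int n * m = x * (a * m)] (mod int p)"
      unfolding n cong_def by (simp add: mod_mult_left_eq mod_mult_right_eq algebra_simps)
    also have "[x * (a * m) = x * 1] (mod int p)" by (rule cong_scalar_left[OF am])
    finally have "(0 + int n * m) mod int p = x" using x by (simp add: cong_def)
    then show ?thesis using iter[OF zero, of n] n by (simp add: mod_add_right_eq)
  qed
  with a show thesis by (rule that)
qed

locale complementing_permutation =
  fixes p :: nat and S :: "int set" and F :: "int \<Rightarrow> int"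
  assumes prime: "prime p" and zero_notin: "0 \<notin> S"
    and F_permutes: "F permutes {0..<int p}"
    and F_complementing: "\<And>u v. u \<in> {0..<int p} \<Longrightarrow> v \<in> {0..<int p} \<Longrightarrow> u \<noteq> v \<Longrightarrow>
        cay_adj p S u v \<longleftrightarrow> \<not> cay_adj p S (F u) (F v)"
begin

abbreviation U :: "int set" where "U \<equiv> {0..<int p}"

definition rot :: "int \<Rightarrow> int \<Rightarrow> int" where
  "rot i x = (if x \<in> U then (x + i) mod int p else x)"

definition Aut :: "(int \<Rightarrow> int) set" where
  "Aut = {g. g permutes U \<and> (\<forall>u\<in>U. \<forall>v\<in>U. cay_adj p S (g u) (g v) = cay_adj p S u v)}"

definition conj_rot :: "int \<Rightarrow> int \<Rightarrow> int" where
  "conj_rot j = F \<circ> rot j \<circ> inv F"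

lemma p_gt_1: "1 < int p"
  using prime_gt_1_nat[OF prime] by simp

lemma rot_add: "rot i (rot j x) = rot (i + j) x"
  using p_gt_1 by (simp add: rot_def mod_simps algebra_simps)

lemma rot_0: "rot 0 = id"
  by (auto simp: rot_def fun_eq_iff)

lemma rot_mod: "rot (i mod int p) = rot i"
  by (auto simp: rot_def fun_eq_iff mod_simps)

lemma rot_permutes: "rot i permutes U"
proof (rule bij_imp_permutes)
  have inverse: "rot (- i) (rot i x) = x" "rot i (rot (- i) x) = x" for x
    using rot_add[of "- i" i x] rot_add[of i "- i" x] by (simp_all add: rot_0)
  have "rot j x \<in> U" if "x \<in> U" for j x using that p_gt_1 by (simp add: rot_def)
  then show "bij_betw (rot i) U U"
    by (intro bij_betw_byWitness[where f'="rot (- i)"]) (auto simp: inverse)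
qed (auto simp: rot_def)

lemma rot_eq_imp_cong: assumes "rot i = rot j" shows "[i = j] (mod int p)"
  using fun_cong[OF assms, of 0] p_gt_1 by (simp add: rot_def cong_def)

lemma Aut_permutes: "g \<in> Aut \<Longrightarrow> g permutes U"
  by (simp add: Aut_def)

lemma Aut_adj: "g \<in> Aut \<Longrightarrow> u \<in> U \<Longrightarrow> v \<in> U \<Longrightarrow> cay_adj p S (g u) (g v) = cay_adj p S u v"
  by (simp add: Aut_def)

lemma rot_Aut: "rot i \<in> Aut"
  using rot_permutes by (simp add: Aut_def rot_def cay_adj_def mod_diff_eq)

lemma id_Aut: "id \<in> Aut"
  by (simp add: Aut_def permutes_id)

lemma Aut_comp: assumes g: "g \<in> Aut" and h: "h \<in> Aut" shows "g \<circ> h \<in> Aut"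
  unfolding Aut_def
proof (intro CollectI conjI ballI)
  show "g \<circ> h permutes U" using Aut_permutes[OF g] Aut_permutes[OF h] by (rule permutes_compose[rotated])
  fix u v assume "u \<in> U" "v \<in> U"
  moreover have "h u \<in> U" "h v \<in> U"
    using \<open>u \<in> U\<close> \<open>v \<in> U\<close> permutes_in_image[OF Aut_permutes[OF h]] by auto
  ultimately show "cay_adj p S ((g \<circ> h) u) ((g \<circ> h) v) = cay_adj p S u v"
    using Aut_adj[OF g] Aut_adj[OF h] by simp
qed

lemma Aut_inv: assumes g: "g \<in> Aut" shows "inv g \<in> Aut"
  unfolding Aut_def
proof (intro CollectI conjI ballI)
  note perm = Aut_permutes[OF g]
  show "inv g permutes U" using permutes_inv[OF perm] .
  fix u v assume "u \<in> U" "v \<in> U"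
  then have "cay_adj p S (g (inv g u)) (g (inv g v)) = cay_adj p S (inv g u) (inv g v)"
    using Aut_adj[OF g] permutes_in_image[OF permutes_inv[OF perm]] by simp
  then show "cay_adj p S (inv g u) (inv g v) = cay_adj p S u v"
    by (simp add: permutes_inverses[OF perm])
qed

lemma card_Aut_dvd_fact: "card Aut dvd fact p"
  using card_permutation_group_dvd_fact[of U Aut] Aut_permutes id_Aut Aut_comp Aut_inv
  by auto

lemma F_inv_permutes: "inv F permutes U"
  using permutes_inv[OF F_permutes] .

lemma conj_rot_Aut: "conj_rot j \<in> Aut"
  unfolding Aut_def
proof (intro CollectI conjI ballI)
  show "conj_rot j permutes U"
    unfolding conj_rot_def by (intro permutes_compose F_inv_permutes rot_permutes F_permutes)
  fix u v assume uv: "u \<in> U" "v \<in> U"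
  show "cay_adj p S (conj_rot j u) (conj_rot j v) = cay_adj p S u v"
  proof (cases "u = v")
    case False
    define u' v' where "u' = inv F u" and "v' = inv F v"
    have U: "u' \<in> U" "v' \<in> U" "rot j u' \<in> U" "rot j v' \<in> U"
      using uv permutes_in_image[OF F_inv_permutes] permutes_in_image[OF rot_permutes]
      by (auto simp: u'_def v'_def)
    have F: "F u' = u" "F v' = v" using permutes_inverses(1)[OF F_permutes] by (auto simp: u'_def v'_def)
    then have ne: "u' \<noteq> v'" "rot j u' \<noteq> rot j v'"
      using False permutes_inj[OF rot_permutes] by (auto dest: injD)
    have "cay_adj p S (conj_rot j u) (conj_rot j v) = cay_adj p S (F (rot j u')) (F (rot j v'))"
      by (simp add: conj_rot_def u'_def v'_def)
    also have "\<dots> = (\<not> cay_adj p S u' v')"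
      using F_complementing[OF U(3,4) ne(2)] Aut_adj[OF rot_Aut[of j] U(1,2)] by blast
    also have "\<dots> = cay_adj p S u v"
      using F_complementing[OF U(1,2) ne(1)] F by simp
    finally show ?thesis .
  qed (simp add: cay_adj_def zero_notin)
qed

lemma conj_rot_add: "conj_rot i (conj_rot j x) = conj_rot (i + j) x"
  by (simp add: conj_rot_def permutes_inverses(2)[OF F_permutes] rot_add)

lemma conj_rot_0: "conj_rot 0 = id"
  by (simp add: conj_rot_def rot_0 fun_eq_iff permutes_inverses(1)[OF F_permutes])

lemma conj_rot_mod: "conj_rot (j mod int p) = conj_rot j"
  by (simp add: conj_rot_def rot_mod)

lemma conj_rot_eq_imp_cong: "conj_rot i = conj_rot j \<Longrightarrow> [i = j] (mod int p)"
proof -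
  have "inv F \<circ> conj_rot k \<circ> F = rot k" for k
    by (simp add: fun_eq_iff conj_rot_def permutes_inverses(2)[OF F_permutes])
  then show "conj_rot i = conj_rot j \<Longrightarrow> [i = j] (mod int p)" by (metis rot_eq_imp_cong)
qed

lemma prime_square_not_dvd_card_Aut: "\<not> p ^ 2 dvd card Aut"
  using card_Aut_dvd_fact prime_square_not_dvd_fact[OF prime] dvd_trans by blast

definition twist :: "int \<Rightarrow> (int \<Rightarrow> int) \<Rightarrow> int \<Rightarrow> int \<Rightarrow> int" where
  "twist i g j = rot i \<circ> g \<circ> conj_rot j"

definition intertwining :: "(int \<Rightarrow> int) set" where
  "intertwining = {g \<in> Aut. \<exists>m. rot 1 \<circ> g = g \<circ> conj_rot m}"

lemma twist_twist: "twist i (twist i' g j') j = twist (i + i') g (j' + j)"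
  by (simp add: twist_def fun_eq_iff rot_add conj_rot_add)

lemma twist_0: "twist 0 g 0 = g"
  by (simp add: twist_def rot_0 conj_rot_0)

lemma twist_inverse: "twist (- i) (twist i g j) (- j) = g"
  using twist_twist[of "- i" i g j "- j"] twist_0 by simp

lemma twist_mod: "twist (i mod int p) g (j mod int p) = twist i g j"
  by (simp add: twist_def rot_mod conj_rot_mod)

lemma twist_Aut: "g \<in> Aut \<Longrightarrow> twist i g j \<in> Aut"
  unfolding twist_def by (intro Aut_comp rot_Aut conj_rot_Aut)

lemma rot_intertwine_iterate:
  assumes "rot e \<circ> g = g \<circ> conj_rot e'"
  shows "rot (e * int n) \<circ> g = g \<circ> conj_rot (e' * int n)"
proof (induction n)
  case 0
  then show ?case by (simp add: rot_0 conj_rot_0)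
next
  case (Suc n)
  have "rot (e * int (Suc n)) \<circ> g = rot e \<circ> (rot (e * int n) \<circ> g)"
    by (simp add: fun_eq_iff rot_add algebra_simps)
  also have "\<dots> = (rot e \<circ> g) \<circ> conj_rot (e' * int n)" by (simp only: Suc.IH comp_assoc)
  also have "\<dots> = g \<circ> conj_rot (e' * int (Suc n))"
    by (simp add: assms fun_eq_iff conj_rot_add algebra_simps)
  finally show ?case .
qed

text \<open>Outside \<open>intertwining\<close> the action is free: a nontrivial \<open>rot i \<circ> g = g \<circ> conj_rot j\<close> with
  \<open>i \<noteq> 0\<close> can be iterated to \<open>i = 1\<close>.\<close>
lemma inj_on_twist:
  assumes g: "g \<in> Aut - intertwining"
  shows "inj_on (\<lambda>(i, j). twist i g j) (U \<times> U)"
proof (rule inj_onI, clarify)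
  fix i j i' j' assume ij: "i \<in> U" "j \<in> U" "i' \<in> U" "j' \<in> U"
    and same: "twist i g j = twist i' g j'"
  have "twist (i - i') g 0 = twist 0 g (j' - j)"
    using same twist_twist[of "- i'" i g j "- j"] twist_twist[of "- i'" i' g j' "- j"] by simp
  then have eq: "rot (i - i') \<circ> g = g \<circ> conj_rot (j' - j)" by (simp add: twist_def rot_0 conj_rot_0)
  have "i = i'"
  proof (rule ccontr)
    assume "i \<noteq> i'"
    moreover have "[i = i'] (mod int p) \<Longrightarrow> i = i'" using ij by (simp add: cong_def)
    ultimately have "\<not> int p dvd (i - i')" by (auto simp: cong_iff_dvd_diff)
    then obtain a where a: "a \<in> {1..<int p}" "[a * (i - i') = 1] (mod int p)"
      using inverse_mod_prime[OF prime] by blast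
    then have "((i - i') * int (nat a)) mod int p = 1 mod int p"
      by (simp add: cong_def mult.commute)
    then have "rot ((i - i') * int (nat a)) = rot 1" by (metis rot_mod)
    then have "g \<in> intertwining"
      using rot_intertwine_iterate[OF eq, of "nat a"] g by (auto simp: intertwining_def)
    then show False using g by simp
  qed
  with eq have "g \<circ> id = g \<circ> conj_rot (j' - j)" by (simp add: rot_0)
  then have "conj_rot 0 = conj_rot (j' - j)"
    using permutes_inj[OF Aut_permutes] g by (simp add: conj_rot_0 fun_eq_iff inj_eq)
  then have "[0 = j' - j] (mod int p)" by (rule conj_rot_eq_imp_cong)
  then have "[j = j'] (mod int p)" by (simp add: cong_iff_dvd_diff dvd_diff_commute)
  with ij have "j = j'" by (simp add: cong_def)
  with \<open>i = i'\<close> show "i = i' \<and> j = j'" by simp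
qed

lemma equiv_twist_orbit_rel: "equiv Aut {(g, h). g \<in> Aut \<and> (\<exists>i j. h = twist i g j)}"
  (is "equiv Aut ?r")
proof (rule equivI)
  show "?r \<subseteq> Aut \<times> Aut" using twist_Aut by auto
  show "refl_on Aut ?r" by (rule refl_onI) (auto intro: exI[of _ 0] twist_0[symmetric])
  show "sym ?r"
  proof (rule symI)
    fix g h assume "(g, h) \<in> ?r"
    then obtain i j where "g \<in> Aut" "h = twist i g j" by auto
    then have "h \<in> Aut" "g = twist (- i) h (- j)" using twist_inverse[of i g j] twist_Aut by auto
    then show "(h, g) \<in> ?r" by blast
  qed
  show "trans ?r" using twist_twist by (auto intro!: transI) blast
qed

lemma twist_orbit:
  assumes "g \<in> Aut"
  shows "{h. \<exists>i j. h = twist i g j} = (\<lambda>(i, j). twist i g j) ` (U \<times> U)"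
proof (intro equalityI subsetI)
  fix h assume "h \<in> {h. \<exists>i j. h = twist i g j}"
  then obtain i j where "h = twist (i mod int p) g (j mod int p)" by (auto simp: twist_mod)
  moreover have "(i mod int p, j mod int p) \<in> U \<times> U" using p_gt_1 by simp
  ultimately show "h \<in> (\<lambda>(i, j). twist i g j) ` (U \<times> U)" by force
qed auto

text \<open>Otherwise \<open>\<int>\<^sub>p \<times> \<int>\<^sub>p\<close>, acting by \<open>(i, j) \<cdot> g = twist i g j\<close>, would act freely on \<open>Aut\<close>,
  so \<open>p\<^sup>2\<close> would divide \<open>card Aut\<close>, a divisor of \<open>p!\<close>.\<close>
lemma intertwining_nonempty: "intertwining \<noteq> {}"
proof
  assume empty: "intertwining = {}"
  define r where "r = {(g, h). g \<in> Aut \<and> (\<exists>i j. h = twist i g j)}"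
  have "p ^ 2 dvd card X" if in_quotient: "X \<in> Aut // r" for X
  proof -
    obtain g where g: "g \<in> Aut" and X: "X = r `` {g}"
      using in_quotient by (auto elim!: quotientE)
    have "X = {h. \<exists>i j. h = twist i g j}" using g by (auto simp: X r_def)
    then have "X = (\<lambda>(i, j). twist i g j) ` (U \<times> U)" using twist_orbit[OF g] by simp
    then have "card X = card (U \<times> U)"
      using inj_on_twist[of g] g empty by (simp add: card_image)
    then show ?thesis by (simp add: card_cartesian_product power2_eq_square)
  qed
  moreover have "finite Aut"
    using finite_permutations[of U] Aut_permutes by (metis finite_atLeastLessThan_int finite_subset mem_Collect_eq subsetI)
  moreover have "equiv Aut r" unfolding r_def by (rule equiv_twist_orbit_rel)
  ultimately have "p ^ 2 dvd card Aut" by (rule equiv_imp_dvd_card[rotated 2])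
  then show False using prime_square_not_dvd_card_Aut by simp
qed

text \<open>Some \<open>g \<circ> F\<close> with \<open>g \<in> intertwining\<close> is an affine anti-isomorphism \<open>x \<mapsto> b + a x\<close>, so
  multiplication by \<open>a\<close> maps \<open>S\<close> onto its complement.\<close>
lemma complementing_multiplier:
  "\<exists>a\<in>{1..<int p}. \<forall>x\<in>{1..<int p}. x \<in> S \<longleftrightarrow> (a * x) mod int p \<notin> S"
proof -
  obtain g m where g: "g \<in> Aut" "rot 1 \<circ> g = g \<circ> conj_rot m"
    using intertwining_nonempty by (auto simp: intertwining_def)
  define \<psi> where "\<psi> = g \<circ> F"
  have range: "\<psi> x \<in> U" if "x \<in> U" for x
    using that permutes_in_image[OF F_permutes] permutes_in_image[OF Aut_permutes[OF g(1)]]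
    by (simp add: \<psi>_def)
  have "rot 1 \<circ> \<psi> = (rot 1 \<circ> g) \<circ> F" by (simp add: \<psi>_def comp_assoc)
  also have "\<dots> = \<psi> \<circ> rot m"
    unfolding g(2) by (simp add: \<psi>_def conj_rot_def fun_eq_iff permutes_inverses(2)[OF F_permutes])
  finally have comm: "rot 1 \<circ> \<psi> = \<psi> \<circ> rot m" .
  have "\<psi> ((x + m) mod int p) = (\<psi> x + 1) mod int p" if "x \<in> U" for x
    using fun_cong[OF comm, of x] that range[OF that] by (simp add: rot_def)
  then obtain a where a: "a \<in> {1..<int p}" and affine: "\<And>x. x \<in> U \<Longrightarrow> \<psi> x = (\<psi> 0 + a * x) mod int p"
    using translation_equivariant_affine[of p \<psi> m] prime range by blast
  have "x \<in> S \<longleftrightarrow> (a * x) mod int p \<notin> S" if x: "x \<in> {1..<int p}" for x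
  proof -
    have U: "x \<in> U" "0 \<in> U" "x \<noteq> 0" using x by auto
    have "cay_adj p S (\<psi> x) (\<psi> 0) \<longleftrightarrow> cay_adj p S (F x) (F 0)"
      using Aut_adj[OF g(1)] permutes_in_image[OF F_permutes] U by (simp add: \<psi>_def)
    moreover have "cay_adj p S (\<psi> x) (\<psi> 0) \<longleftrightarrow> (a * x) mod int p \<in> S"
      using affine[OF U(1)] by (simp add: cay_adj_def mod_simps)
    ultimately show ?thesis using F_complementing[OF U] x by (simp add: cay_adj_def)
  qed
  with a show ?thesis by blast
qed

end

lemma self_complementary_multiplier:
  assumes p: "prime p" and S: "0 \<notin> S" and sc: "self_complementary p S"
  obtains a where "a \<in> {1..<int p}" "\<And>x. x \<in> {1..<int p} \<Longrightarrow> x \<in> S \<longleftrightarrow> (a * x) mod int p \<notin> S"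
proof -
  obtain f where bij: "bij_betw f {0..<int p} {0..<int p}"
    and iso: "\<And>u v. u \<in> {0..<int p} \<Longrightarrow> v \<in> {0..<int p} \<Longrightarrow> u \<noteq> v \<Longrightarrow>
        (cay_adj p S u v \<longleftrightarrow> (f u \<noteq> f v \<and> \<not> cay_adj p S (f u) (f v)))"
    using sc unfolding self_complementary_def by blast
  define F where "F x = (if x \<in> {0..<int p} then f x else x)" for x
  have "bij_betw F {0..<int p} {0..<int p}"
    using bij unfolding F_def by (rule bij_betw_cong[THEN iffD1, rotated]) simp
  then have "F permutes {0..<int p}" by (rule bij_imp_permutes) (auto simp: F_def)
  moreover have "cay_adj p S u v \<longleftrightarrow> \<not> cay_adj p S (F u) (F v)"
    if "u \<in> {0..<int p}" "v \<in> {0..<int p}" "u \<noteq> v" for u v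
    using iso[OF that] that bij by (auto simp: F_def bij_betw_def dest: inj_onD)
  ultimately interpret complementing_permutation p S F
    using p S by unfold_locales
  show thesis using complementing_multiplier that by blast
qed

section \<open>The lower bound\<close>

definition mult_pair :: "int \<Rightarrow> nat \<Rightarrow> int \<Rightarrow> nat \<Rightarrow> int" where
  "mult_pair a p c = (\<lambda>i. if i = 0 then c else if i = 1 then (a * c) mod int p else 0)"

lemma mult_pair_add:
  "(\<lambda>i. (mult_pair a p c i + mult_pair a p d i) mod int p) = mult_pair a p ((c + d) mod int p)"
  by (simp add: mult_pair_def fun_eq_iff mod_simps distrib_left)

lemma mult_pair_smult:
  "(\<lambda>i. (e * mult_pair a p c i) mod int p) = mult_pair a p ((e * c) mod int p)"
  by (simp add: mult_pair_def fun_eq_iff mod_simps mult.left_commute)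

lemma card_mult_pair_image: "card (mult_pair a p ` {0..<int p}) = p"
proof -
  have "inj_on (mult_pair a p) {0..<int p}"
  proof (rule inj_onI)
    fix c d assume "mult_pair a p c = mult_pair a p d"
    then have "mult_pair a p c 0 = mult_pair a p d 0" by simp
    then show "c = d" by (simp add: mult_pair_def)
  qed
  then show ?thesis by (simp add: card_image)
qed

lemma mult_pair_lin_subspace:
  assumes p: "0 < p" shows "lin_subspace p 2 (mult_pair a p ` {0..<int p})"
  unfolding lin_subspace_def
proof (intro conjI ballI)
  show "mult_pair a p ` {0..<int p} \<subseteq> Fvecs p 2"
    using p by (auto simp: mult_pair_def Fvecs_def)
  show "(\<lambda>i. 0) \<in> mult_pair a p ` {0..<int p}"
    using p by (intro image_eqI[of _ _ 0]) (auto simp: mult_pair_def)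
  fix u v assume "u \<in> mult_pair a p ` {0..<int p}" "v \<in> mult_pair a p ` {0..<int p}"
  then show "(\<lambda>i. (u i + v i) mod int p) \<in> mult_pair a p ` {0..<int p}"
    using p by (auto simp: mult_pair_add)
next
  fix e u assume "u \<in> mult_pair a p ` {0..<int p}"
  then show "(\<lambda>i. (e * u i) mod int p) \<in> mult_pair a p ` {0..<int p}"
    using p by (auto simp: mult_pair_smult)
qed

lemma prime_not_dvd_mult_residues:
  assumes "prime p" "a \<in> {1..<int p}" "x \<in> {1..<int p}"
  shows "\<not> int p dvd a * x"
proof
  assume "int p dvd a * x"
  then have "int p dvd a \<or> int p dvd x" using assms(1) by (intro prime_dvd_multD) simp_all
  then show False using assms(2,3) zdvd_imp_le[of "int p" a] zdvd_imp_le[of "int p" x] by auto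
qed

text \<open>Two distinct points \<open>(c, a c)\<close>, \<open>(d, a d)\<close> differ by \<open>x = c - d\<close> in the first coordinate and
  by \<open>a x\<close> in the second; one of the two differences is a non-edge.\<close>
lemma mult_pair_strong_indep:
  assumes p: "prime p"
    and a: "a \<in> {1..<int p}" "\<And>x. x \<in> {1..<int p} \<Longrightarrow> x \<in> S \<longleftrightarrow> (a * x) mod int p \<notin> S"
  shows "strong_indep p S 2 (mult_pair a p ` {0..<int p})"
  unfolding strong_indep_def
proof (intro conjI ballI)
  show "mult_pair a p ` {0..<int p} \<subseteq> Fvecs p 2"
    using mult_pair_lin_subspace[OF prime_gt_0_nat[OF p]] by (simp add: lin_subspace_def)
  fix u v assume "u \<in> mult_pair a p ` {0..<int p}" "v \<in> mult_pair a p ` {0..<int p}"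
  then obtain c d where uv: "u = mult_pair a p c" "v = mult_pair a p d"
    and cd: "c \<in> {0..<int p}" "d \<in> {0..<int p}" by blast
  show "\<not> strong_adj p S 2 u v"
  proof (cases "c = d")
    case False
    define x where "x = (c - d) mod int p"
    have "\<not> [c = d] (mod int p)" using cd False by (simp add: cong_def)
    then have "x \<noteq> 0" by (simp add: x_def cong_iff_dvd_diff dvd_eq_mod_eq_0)
    moreover have "0 \<le> x" "x < int p" using prime_gt_0_nat[OF p] by (simp_all add: x_def)
    ultimately have x: "x \<in> {1..<int p}" by simp
    have ax: "((a * c) mod int p - (a * d) mod int p) mod int p = (a * x) mod int p"
      by (simp add: x_def mod_simps right_diff_distrib)
    have adj_c_d: "cay_adj p S c d \<longleftrightarrow> x \<in> S" by (simp add: cay_adj_def x_def)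
    have adj_ac_ad: "cay_adj p S ((a * c) mod int p) ((a * d) mod int p) \<longleftrightarrow> (a * x) mod int p \<in> S"
      using ax by (simp add: cay_adj_def)
    have "\<not> int p dvd a * x" using prime_not_dvd_mult_residues[OF p a(1) x] .
    then have "(a * c) mod int p \<noteq> (a * d) mod int p" using ax by (auto simp: dvd_eq_mod_eq_0)
    then have "u 1 = v 1 \<or> cay_adj p S (u 1) (v 1) \<longleftrightarrow> (a * x) mod int p \<in> S"
      using adj_ac_ad by (simp add: uv mult_pair_def)
    moreover have "u 0 = v 0 \<or> cay_adj p S (u 0) (v 0) \<longleftrightarrow> x \<in> S"
      using False adj_c_d by (simp add: uv mult_pair_def)
    moreover have "(0::nat) < 2" "(1::nat) < 2" by simp_all
    ultimately show ?thesis using a(2)[OF x] unfolding strong_adj_def by blast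
  qed (simp add: strong_adj_def uv)
qed

lemma finite_lin_indep_cards:
  "finite {card V | V. lin_subspace p k V \<and> strong_indep p S k V}"
proof (rule finite_subset)
  show "{card V | V. lin_subspace p k V \<and> strong_indep p S k V} \<subseteq> {..card (Fvecs p k)}"
    using card_mono[OF Fvecs_finite] by (auto simp: lin_subspace_def)
qed simp

lemma card_le_alpha_lin:
  "lin_subspace p k V \<Longrightarrow> strong_indep p S k V \<Longrightarrow> card V \<le> alpha_lin p S k"
  unfolding alpha_lin_def by (rule Max_ge[OF finite_lin_indep_cards]) blast

lemma alpha_lin_attained:
  assumes "0 < p"
  obtains V where "lin_subspace p k V" "strong_indep p S k V" "card V = alpha_lin p S k"
proof -
  have "(\<lambda>i. 0) \<in> Fvecs p k" using assms by (simp add: Fvecs_def)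
  then have "lin_subspace p k {\<lambda>i. 0} \<and> strong_indep p S k {\<lambda>i. 0}"
    by (simp add: lin_subspace_def strong_indep_def strong_adj_def)
  then have "alpha_lin p S k \<in> {card V | V. lin_subspace p k V \<and> strong_indep p S k V}"
    unfolding alpha_lin_def by (intro Max_in[OF finite_lin_indep_cards]) blast
  then show thesis using that by auto
qed

lemma alpha_lin_root_le_sqrt:
  assumes p: "prime p" and S: "S \<subseteq> {1..<int p}" and sc: "self_complementary p S" and k: "1 \<le> k"
  shows "real (alpha_lin p S k) powr (1 / real k) \<le> sqrt (real p)"
proof -
  obtain V where V: "lin_subspace p k V" "strong_indep p S k V" "card V = alpha_lin p S k"
    using alpha_lin_attained[OF prime_gt_0_nat[OF p]] by blast
  obtain d where d: "card V = p ^ d" using lin_subspace_card[OF p V(1)] by blast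
  have "(p - 1) * (2 * d) \<le> k * (2 * card ({1..<int p} - S))"
    using lin_indep_dim_le[OF p V(1,2) d] by simp
  also have "\<dots> \<le> k * (p - 1)"
    using self_complementary_card_non_neighbours[OF S sc] by simp
  finally have "2 * d \<le> k" using prime_gt_1_nat[OF p] by (simp add: mult.commute)
  have sqrt_p: "1 \<le> sqrt (real p)" using prime_gt_0_nat[OF p] by simp
  have "real (alpha_lin p S k) = sqrt (real p) ^ (2 * d)"
    using V(3) d by (simp add: power_mult)
  also have "\<dots> \<le> sqrt (real p) ^ k" using \<open>2 * d \<le> k\<close> sqrt_p by (rule power_increasing)
  finally have "real (alpha_lin p S k) powr (1 / real k) \<le> (sqrt (real p) ^ k) powr (1 / real k)"
    by (intro powr_mono2) auto
  also have "\<dots> = sqrt (real p)"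
    using k sqrt_p by (simp add: powr_realpow[symmetric] powr_powr)
  finally show ?thesis .
qed

lemma sqrt_le_alpha_lin_2_root:
  assumes p: "prime p" and S: "0 \<notin> S" and sc: "self_complementary p S"
  shows "sqrt (real p) \<le> real (alpha_lin p S 2) powr (1 / real 2)"
proof -
  obtain a where a: "a \<in> {1..<int p}" "\<And>x. x \<in> {1..<int p} \<Longrightarrow> x \<in> S \<longleftrightarrow> (a * x) mod int p \<notin> S"
    using self_complementary_multiplier[OF p S sc] by blast
  have "p \<le> alpha_lin p S 2"
    using card_le_alpha_lin[OF mult_pair_lin_subspace[OF prime_gt_0_nat[OF p]]
        mult_pair_strong_indep[OF p a]]
    by (simp add: card_mult_pair_image)
  then have "real p powr (1 / 2) \<le> real (alpha_lin p S 2) powr (1 / 2)"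
    by (intro powr_mono2) auto
  then show ?thesis by (simp add: powr_half_sqrt)
qed

theorem mainTheorem6:
  fixes p :: nat and S :: "int set"
  assumes "prime p"
    and "cayley_conn_set p S"
    and "self_complementary p S"
  shows "theta_lin p S = sqrt (real p)"
proof -
  have S: "S \<subseteq> {1..<int p}" "0 \<notin> S" using assms(2) by (auto simp: cayley_conn_set_def)
  let ?root = "\<lambda>k. real (alpha_lin p S k) powr (1 / real k)"
  have upper: "?root k \<le> sqrt (real p)" if "k \<in> {1..}" for k
    using alpha_lin_root_le_sqrt[OF assms(1) S(1) assms(3)] that by simp
  have "theta_lin p S = (SUP k\<in>{1..}. ?root k)" unfolding theta_lin_def ..
  also have "\<dots> = sqrt (real p)"
  proof (rule antisym)
    show "(SUP k\<in>{1..}. ?root k) \<le> sqrt (real p)" by (rule cSUP_least) (use upper in auto)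
    have "bdd_above (?root ` {1..})" using upper by (intro bdd_aboveI2) auto
    then show "sqrt (real p) \<le> (SUP k\<in>{1..}. ?root k)"
      by (rule cSUP_upper2[of _ _ 2]) (use sqrt_le_alpha_lin_2_root[OF assms(1) S(2) assms(3)] in auto)
  qed
  finally show ?thesis .
qed

end
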